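(* Let $\mathcal{A}$ be a pOC with state set $Q$ whose underlying chain $\mathcal{X}$ is strongly connected, with trend $t\ge0$. Assume $[p{\downarrow}]>0$ for all $p\in Q$. Let $v$ be a potential and $|v|=v_{\max}-v_{\min}$. Let $c^{(0)}\ge1$ and let $p^{(0)}\in Q$ satisfy $v_{p^{(0)}}=v_{\max}$. Let $b\in\mathbb{N}$. Then $$\mathcal{P}\bigl(\exists i: c^{(i)}\ge b\ \wedge\ \forall j\le i: c^{(j)}\ge1 \ \big|\ \mathrm{Run}(p^{(0)}(c^{(0)}))\bigr)\ \ge\ \frac{1}{b+1+|v|},$$ where $c^{(i)}$ denotes the counter value of the $i$-th configuration of a run.
   Context: A pOC is $\mathcal{A}=(Q,\delta^{=0},\delta^{>0},P^{=0},P^{>0})$ with the following components. - $\delta^{>0}\subseteq Q\times\{-1,0,1\}\times Q$ are the positive rules and $\delta^{=0}\subseteq Q\times\{0,1\}\times Q$ are the zero rules. Every state has both kinds of outgoing rule. - $P^{>0}$ and $P^{=0}$ are positive probability distributions over the outgoing rules of each state. $\mathcal{M}_\mathcal{A}$ is the Markov chain on configurations $p(i)$ with the following transitions: - $p(0)\to q(c)$ with probability $P^{=0}(p,c,q)$; - for $i\ge1$, $p(i)\to q(i+c)$ with probability $P^{>0}(p,c,q)$. $\mathrm{Run}(r(c))$ is the set of runs starting in $r(c)$. $[p{\downarrow}]$ is the probability that a run from $p(1)$ eventually reaches counter value $0$. $\mathcal{X}$ is the finite Markov chain on $Q$ with transition matrix $A_{pq}=\sum_cP^{>0}(p,c,q)$.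 With $\alpha$ its invariant distribution and $s_p=\sum_{(p,c,q)\in\delta^{>0}}P^{>0}(p,c,q)c$, the trend is $t=\alpha s$. A potential is $v\in\mathbb{R}^Q$ with $s+Av=v+\mathbf{1}t$. $v_{\max}$ and $v_{\min}$ are its largest and smallest components. *)

theory Defs
  imports Complex_Main
begin

text \<open>The rules are encoded by their
probabilities: Pz p c q = P^{=0}(p,c,q) and Pp p c q = P^{>0}(p,c,q); a triple is a
rule iff its probability is positive (so the distributions are positive on the rules).\<close>

definition pOC :: "('q::finite \<Rightarrow> int \<Rightarrow> 'q \<Rightarrow> real) \<Rightarrow> ('q \<Rightarrow> int \<Rightarrow> 'q \<Rightarrow> real) \<Rightarrow> bool" where
  "pOC Pz Pp \<longleftrightarrow>
     (\<forall>p c q. 0 \<le> Pz p c q \<and> 0 \<le> Pp p c q) \<and>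
     (\<forall>p c q. 0 < Pz p c q \<longrightarrow> c \<in> {0, 1}) \<and>
     (\<forall>p c q. 0 < Pp p c q \<longrightarrow> c \<in> {-1, 0, 1}) \<and>
     (\<forall>p. (\<Sum>q\<in>UNIV. \<Sum>c\<in>{0, 1}. Pz p c q) = 1) \<and>
     (\<forall>p. (\<Sum>q\<in>UNIV. \<Sum>c\<in>{-1, 0, 1}. Pp p c q) = 1)"

definition pOC_step :: "('q::finite \<Rightarrow> int \<Rightarrow> 'q \<Rightarrow> real) \<Rightarrow> ('q \<Rightarrow> int \<Rightarrow> 'q \<Rightarrow> real)
    \<Rightarrow> ('q \<times> nat \<Rightarrow> real) \<Rightarrow> 'q \<times> nat \<Rightarrow> real" where
  "pOC_step Pz Pp f x = (case x of (p, i) \<Rightarrow>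
     if i = 0 then (\<Sum>q\<in>UNIV. \<Sum>c\<in>{0, 1}. Pz p c q * f (q, nat c))
     else (\<Sum>q\<in>UNIV. \<Sum>c\<in>{-1, 0, 1}. Pp p c q * f (q, nat (int i + c))))"

fun until_n :: "('q::finite \<Rightarrow> int \<Rightarrow> 'q \<Rightarrow> real) \<Rightarrow> ('q \<Rightarrow> int \<Rightarrow> 'q \<Rightarrow> real)
    \<Rightarrow> ('q \<times> nat) set \<Rightarrow> ('q \<times> nat) set \<Rightarrow> nat \<Rightarrow> 'q \<times> nat \<Rightarrow> real" where
  "until_n Pz Pp S T 0 x = (if x \<in> T then 1 else 0)"
| "until_n Pz Pp S T (Suc n) x =
     (if x \<in> T then 1 else if x \<in> S then pOC_step Pz Pp (until_n Pz Pp S T n) x else 0)"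

text \<open>Probability of the event: exists i with x_i in T and x_j in S for all j < i.\<close>
definition until_prob :: "('q::finite \<Rightarrow> int \<Rightarrow> 'q \<Rightarrow> real) \<Rightarrow> ('q \<Rightarrow> int \<Rightarrow> 'q \<Rightarrow> real)
    \<Rightarrow> ('q \<times> nat) set \<Rightarrow> ('q \<times> nat) set \<Rightarrow> 'q \<times> nat \<Rightarrow> real" where
  "until_prob Pz Pp S T x = (SUP n. until_n Pz Pp S T n x)"

definition term_prob :: "('q::finite \<Rightarrow> int \<Rightarrow> 'q \<Rightarrow> real) \<Rightarrow> ('q \<Rightarrow> int \<Rightarrow> 'q \<Rightarrow> real) \<Rightarrow> 'q \<Rightarrow> real" where
  "term_prob Pz Pp p = until_prob Pz Pp UNIV {x. snd x = 0} (p, 1)"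

definition chainA :: "('q::finite \<Rightarrow> int \<Rightarrow> 'q \<Rightarrow> real) \<Rightarrow> 'q \<Rightarrow> 'q \<Rightarrow> real" where
  "chainA Pp p q = (\<Sum>c\<in>{-1, 0, 1}. Pp p c q)"

definition strongly_connected :: "('q::finite \<Rightarrow> 'q \<Rightarrow> real) \<Rightarrow> bool" where
  "strongly_connected A \<longleftrightarrow> (\<forall>p q. (p, q) \<in> {(x, y). 0 < A x y}\<^sup>*)"

definition invariant_dist :: "('q::finite \<Rightarrow> 'q \<Rightarrow> real) \<Rightarrow> ('q \<Rightarrow> real) \<Rightarrow> bool" where
  "invariant_dist A \<alpha> \<longleftrightarrow> (\<forall>p. 0 \<le> \<alpha> p) \<and> (\<Sum>p\<in>UNIV. \<alpha> p) = 1 \<and>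
     (\<forall>q. (\<Sum>p\<in>UNIV. \<alpha> p * A p q) = \<alpha> q)"

definition drift :: "('q::finite \<Rightarrow> int \<Rightarrow> 'q \<Rightarrow> real) \<Rightarrow> 'q \<Rightarrow> real" where
  "drift Pp p = (\<Sum>q\<in>UNIV. \<Sum>c\<in>{-1, 0, 1}. Pp p c q * real_of_int c)"

text \<open>Trend t = alpha s, alpha the (for strongly connected X unique) invariant distribution.\<close>
definition trend :: "('q::finite \<Rightarrow> int \<Rightarrow> 'q \<Rightarrow> real) \<Rightarrow> real" where
  "trend Pp = (let \<alpha> = (SOME \<alpha>. invariant_dist (chainA Pp) \<alpha>) in
     (\<Sum>p\<in>UNIV. \<alpha> p * drift Pp p))"

definition potential :: "('q::finite \<Rightarrow> int \<Rightarrow> 'q \<Rightarrow> real) \<Rightarrow> ('q \<Rightarrow> real) \<Rightarrow> bool" where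
  "potential Pp v \<longleftrightarrow>
     (\<forall>p. drift Pp p + (\<Sum>q\<in>UNIV. chainA Pp p q * v q) = v p + trend Pp)"

end

theory Submission
  imports Defs
begin

text \<open>While the counter is positive, the expected change of c + v(q) in one step is the trend
t \<ge> 0: the potential absorbs the state-dependent drift. Truncating the counter at b and
normalising gives h(q(c)) = (min(c, b) + v(q) - v_max) / (b + 1 + |v|), which is at most 0 at
counter 0, at most 1 everywhere, subharmonic strictly between 0 and b, and at least
1/(b + 1 + |v|) at p0(c0). Hence h(p0(c0)) is bounded by the probability of reaching b before 0
plus the probability of staying strictly between 0 and b for n steps. The latter vanishes as
n grows, because [p\<down>] > 0 gives, uniformly on the strip, a positive probability of
reaching 0 within a fixed number of steps.\<close>

lemma pOC_step_add:
  "pOC_step Pz Pp (\<lambda>y. f y + g y) x = pOC_step Pz Pp f x + pOC_step Pz Pp g x"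
  unfolding pOC_step_def by (cases x) (simp add: sum.distrib distrib_left)

lemma pOC_step_cmult:
  "pOC_step Pz Pp (\<lambda>y. a * f y) x = a * pOC_step Pz Pp f x"
  unfolding pOC_step_def by (cases x) (simp add: sum_distrib_left algebra_simps)

lemma pOC_step_cong_pos:
  assumes "1 \<le> i" and "\<And>q m. m \<le> Suc i \<Longrightarrow> f (q, m) = g (q, m)"
  shows "pOC_step Pz Pp f (p, i) = pOC_step Pz Pp g (p, i)"
  using assms unfolding pOC_step_def by (auto intro!: sum.cong)

lemma pOC_step_shift:
  assumes "1 \<le> j" and "\<And>q m. f (q, m + k) = g (q, m)"
  shows "pOC_step Pz Pp f (p, j + k) = pOC_step Pz Pp g (p, j)"
proof -
  have "f (q, nat (int (j + k) + c)) = g (q, nat (int j + c))" if "c \<in> {-1, 0, 1}" for q c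
  proof -
    have "nat (int (j + k) + c) = nat (int j + c) + k" using assms(1) that by auto
    then show ?thesis using assms(2) by simp
  qed
  then show ?thesis using assms(1) unfolding pOC_step_def by (auto intro!: sum.cong)
qed

fun stay_n :: "('q::finite \<Rightarrow> int \<Rightarrow> 'q \<Rightarrow> real) \<Rightarrow> ('q \<Rightarrow> int \<Rightarrow> 'q \<Rightarrow> real)
    \<Rightarrow> ('q \<times> nat) set \<Rightarrow> nat \<Rightarrow> 'q \<times> nat \<Rightarrow> real" where
  "stay_n Pz Pp R 0 x = (if x \<in> R then 1 else 0)"
| "stay_n Pz Pp R (Suc n) x = (if x \<in> R then pOC_step Pz Pp (stay_n Pz Pp R n) x else 0)"

lemma stay_n_outside: "x \<notin> R \<Longrightarrow> stay_n Pz Pp R n x = 0"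
  by (cases n) simp_all

lemma until_n_level_shift:
  "until_n Pz Pp UNIV {x. snd x = k} n (p, j + k) = until_n Pz Pp UNIV {x. snd x = 0} n (p, j)"
proof (induction n arbitrary: p j)
  case (Suc n)
  then show ?case
    by (cases "j = 0") (simp_all add: pOC_step_shift[where g = "until_n Pz Pp UNIV {x. snd x = 0} n"])
qed simp

locale pOC_chain =
  fixes Pz Pp :: "'q::finite \<Rightarrow> int \<Rightarrow> 'q \<Rightarrow> real"
  assumes pOC: "pOC Pz Pp"
begin

lemma step_const: "pOC_step Pz Pp (\<lambda>_. a) x = a"
proof -
  obtain p i where "x = (p, i)" by (cases x)
  moreover have "(\<Sum>q\<in>UNIV. \<Sum>c\<in>{0, 1}. Pz p c q) = 1" "(\<Sum>q\<in>UNIV. \<Sum>c\<in>{-1, 0, 1}. Pp p c q) = 1"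
    using pOC unfolding pOC_def by blast+
  ultimately show ?thesis
    unfolding pOC_step_def by (simp flip: distrib_right sum_distrib_right)
qed

lemma step_mono:
  assumes "\<And>y. f y \<le> g y"
  shows "pOC_step Pz Pp f x \<le> pOC_step Pz Pp g x"
  using pOC assms unfolding pOC_def pOC_step_def
  by (cases x) (auto intro!: sum_mono add_mono mult_left_mono)

lemma step_affine: "pOC_step Pz Pp (\<lambda>y. a * f y + c) x = a * pOC_step Pz Pp f x + c"
  by (simp add: pOC_step_add pOC_step_cmult step_const)

lemma until_n_bounds: "0 \<le> until_n Pz Pp S T n x \<and> until_n Pz Pp S T n x \<le> 1"
proof (induction n arbitrary: x)
  case (Suc n)
  have "pOC_step Pz Pp (\<lambda>_. 0) x \<le> pOC_step Pz Pp (until_n Pz Pp S T n) x"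
    and "pOC_step Pz Pp (until_n Pz Pp S T n) x \<le> pOC_step Pz Pp (\<lambda>_. 1) x"
    using Suc by (auto intro: step_mono)
  then show ?case by (simp add: step_const)
qed simp

lemma until_n_Suc_ge: "until_n Pz Pp S T n x \<le> until_n Pz Pp S T (Suc n) x"
proof (induction n arbitrary: x)
  case 0
  have "pOC_step Pz Pp (\<lambda>_. 0) x \<le> pOC_step Pz Pp (until_n Pz Pp S T 0) x"
    by (rule step_mono) simp
  then show ?case by (simp add: step_const)
next
  case (Suc n)
  then show ?case by (auto intro: step_mono simp del: until_n.simps(1))
qed

lemma until_n_mono: "m \<le> n \<Longrightarrow> until_n Pz Pp S T m x \<le> until_n Pz Pp S T n x"
  using lift_Suc_mono_le[of "\<lambda>n. until_n Pz Pp S T n x"] until_n_Suc_ge by blast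

lemma until_n_target_mono:
  assumes "T \<subseteq> T'"
  shows "until_n Pz Pp S T n x \<le> until_n Pz Pp S T' n x"
proof (induction n arbitrary: x)
  case (Suc n)
  then show ?case
    using assms until_n_bounds[of S T "Suc n" x] by (auto intro: step_mono simp del: until_n.simps(1))
qed (use assms in auto)

lemma until_n_le_until_prob: "until_n Pz Pp S T n x \<le> until_prob Pz Pp S T x"
  unfolding until_prob_def
  by (rule cSUP_upper) (auto intro!: bdd_aboveI[of _ 1] simp: until_n_bounds)

lemma until_n_compose:
  assumes "0 \<le> a" "a \<le> 1" and reach: "\<And>y. y \<in> T1 \<Longrightarrow> a \<le> until_n Pz Pp S T2 m y"
  shows "a * until_n Pz Pp S T1 n x \<le> until_n Pz Pp S T2 (n + m) x"
proof (induction n arbitrary: x)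
  case 0
  show ?case using assms until_n_bounds[of S T2 m x] by auto
next
  case (Suc n)
  show ?case
  proof (cases "x \<in> T1")
    case True
    then have "a \<le> until_n Pz Pp S T2 m x" by (rule reach)
    also have "\<dots> \<le> until_n Pz Pp S T2 (Suc n + m) x" by (rule until_n_mono) simp
    finally show ?thesis using True \<open>a \<le> 1\<close> by simp
  next
    case False
    have "pOC_step Pz Pp (\<lambda>y. a * until_n Pz Pp S T1 n y) x
        \<le> pOC_step Pz Pp (until_n Pz Pp S T2 (n + m)) x"
      using Suc by (rule step_mono)
    moreover have "0 \<le> pOC_step Pz Pp (until_n Pz Pp S T2 (n + m)) x"
      using step_mono[of "\<lambda>_. 0" "until_n Pz Pp S T2 (n + m)" x] until_n_bounds
      by (simp add: step_const)
    moreover have "a * until_n Pz Pp S T1 (Suc n) x \<le> a"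
      using until_n_bounds[of S T1 "Suc n" x] \<open>0 \<le> a\<close> by (simp add: mult_left_le)
    ultimately show ?thesis using False \<open>a \<le> 1\<close> by (auto simp: pOC_step_cmult)
  qed
qed

lemma stay_n_plus_until_n: "stay_n Pz Pp R n x + until_n Pz Pp UNIV (- R) n x = 1"
proof (induction n arbitrary: x)
  case (Suc n)
  then have "(\<lambda>y. stay_n Pz Pp R n y + until_n Pz Pp UNIV (- R) n y) = (\<lambda>_. 1)"
    by auto
  then show ?case
    using pOC_step_add[of Pz Pp "stay_n Pz Pp R n" "until_n Pz Pp UNIV (- R) n" x]
    by (auto simp: step_const)
qed simp

lemma stay_n_bounds: "0 \<le> stay_n Pz Pp R n x \<and> stay_n Pz Pp R n x \<le> 1"
  using stay_n_plus_until_n[of R n x] until_n_bounds[of UNIV "- R" n x] by linarith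

lemma stay_n_Suc_add_le:
  assumes "0 \<le> a" "\<And>y. stay_n Pz Pp R n y \<le> a"
  shows "stay_n Pz Pp R (Suc m + n) x \<le> a * stay_n Pz Pp R m x"
proof (induction m arbitrary: x)
  case 0
  have "pOC_step Pz Pp (stay_n Pz Pp R n) x \<le> pOC_step Pz Pp (\<lambda>_. a) x"
    using assms(2) by (rule step_mono)
  then show ?case using assms(1) by (auto simp: step_const)
next
  case (Suc m)
  have "pOC_step Pz Pp (stay_n Pz Pp R (Suc m + n)) x \<le> pOC_step Pz Pp (\<lambda>y. a * stay_n Pz Pp R m y) x"
    using Suc by (rule step_mono)
  then show ?case by (simp add: pOC_step_cmult)
qed

lemma stay_n_geometric:
  assumes "\<And>y. stay_n Pz Pp R L y \<le> q"
  shows "stay_n Pz Pp R (k * Suc L) x \<le> q ^ k"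
proof (induction k arbitrary: x)
  case 0
  show ?case using stay_n_bounds[of R 0 x] by simp
next
  case (Suc k)
  have q: "0 \<le> q" using assms[of x] stay_n_bounds[of R L x] by linarith
  have "stay_n Pz Pp R (Suc L + k * Suc L) x \<le> q ^ k * stay_n Pz Pp R L x"
    by (rule stay_n_Suc_add_le) (use Suc q in auto)
  also have "\<dots> \<le> q ^ k * q"
    using assms q by (simp add: mult_left_mono)
  finally show ?case by (simp add: add.commute mult.commute)
qed

lemma term_within_uniform_time:
  assumes "\<forall>p. 0 < term_prob Pz Pp p"
  obtains N where "\<And>p. 0 < until_n Pz Pp UNIV {x. snd x = 0} N (p, 1)"
proof -
  let ?z = "\<lambda>n p. until_n Pz Pp UNIV {x. snd x = 0} n (p, 1)"
  have "\<exists>n. 0 < ?z n p" for p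
  proof (rule ccontr)
    assume "\<nexists>n. 0 < ?z n p"
    then have "term_prob Pz Pp p \<le> 0"
      unfolding term_prob_def until_prob_def by (intro cSUP_least) (auto simp: not_less)
    with assms show False by (meson not_le)
  qed
  then obtain n where n: "\<And>p. 0 < ?z (n p) p" by metis
  have "0 < ?z (Max (range n)) p" for p
    using n[of p] until_n_mono[of "n p" "Max (range n)"] by (simp add: less_le_trans)
  then show ?thesis by (rule that)
qed

lemma term_from_level_ge_power:
  assumes "\<forall>p. 0 < term_prob Pz Pp p"
  obtains d N where "0 < d" "d \<le> 1"
    "\<And>c p. d ^ c \<le> until_n Pz Pp UNIV {x. snd x = 0} (c * N) (p, c)"
proof -
  let ?z = "\<lambda>n x. until_n Pz Pp UNIV {x. snd x = 0} n x"
  obtain N where N: "\<And>p. 0 < ?z N (p, 1)"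
    using term_within_uniform_time[OF assms] by blast
  define d where "d = Min (range (\<lambda>p. ?z N (p, 1)))"
  have d_le: "d \<le> ?z N (p, 1)" for p
    unfolding d_def by simp
  have "d \<in> range (\<lambda>p. ?z N (p, 1))"
    unfolding d_def by (rule Min_in) auto
  then have "0 < d" using N by auto
  have "d \<le> 1" using d_le until_n_bounds by (meson order_trans)
  have "d ^ c \<le> ?z (c * N) (p, c)" for c p
  proof (induction c arbitrary: p)
    case (Suc c)
    \<comment> \<open>Reaching level c from c + 1 is a translate of reaching 0 from 1.\<close>
    have "d ^ c * until_n Pz Pp UNIV {x. snd x = c} N (p, 1 + c) \<le> ?z (N + c * N) (p, 1 + c)"
      by (rule until_n_compose) (use Suc.IH \<open>0 < d\<close> \<open>d \<le> 1\<close> in \<open>auto simp: power_le_one\<close>)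
    moreover have "until_n Pz Pp UNIV {x. snd x = c} N (p, 1 + c) = ?z N (p, 1)"
      by (rule until_n_level_shift)
    moreover have "d ^ Suc c \<le> d ^ c * ?z N (p, 1)"
      using d_le[of p] \<open>0 < d\<close> by (simp add: mult_left_mono)
    ultimately show ?case by simp
  qed simp
  with \<open>0 < d\<close> \<open>d \<le> 1\<close> show ?thesis by (rule that)
qed

lemma stay_n_strip_le:
  assumes "\<forall>p. 0 < term_prob Pz Pp p" and strip: "\<And>x. x \<in> R \<Longrightarrow> 1 \<le> snd x \<and> snd x \<le> b"
  obtains L \<delta> where "0 < \<delta>" "\<And>y. stay_n Pz Pp R L y \<le> 1 - \<delta>"
proof -
  obtain d N where d: "0 < d" "d \<le> 1"
    and reach: "\<And>c p. d ^ c \<le> until_n Pz Pp UNIV {x. snd x = 0} (c * N) (p, c)"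
    using term_from_level_ge_power[OF assms(1)] by metis
  have bound: "stay_n Pz Pp R (b * N) y \<le> 1 - d ^ b" for y
  proof (cases "y \<in> R")
    case False
    then show ?thesis using d by (simp add: stay_n_outside power_le_one)
  next
    case True
    obtain p j where y: "y = (p, j)" by (cases y)
    have "j \<le> b" using strip[OF True] y by simp
    have "d ^ b \<le> d ^ j"
      using \<open>j \<le> b\<close> d by (simp add: power_decreasing)
    also have "\<dots> \<le> until_n Pz Pp UNIV {x. snd x = 0} (j * N) y"
      unfolding y by (rule reach)
    also have "\<dots> \<le> until_n Pz Pp UNIV (- R) (j * N) y"
      by (rule until_n_target_mono) (auto dest: strip)
    also have "\<dots> \<le> until_n Pz Pp UNIV (- R) (b * N) y"
      by (rule until_n_mono) (use \<open>j \<le> b\<close> in simp)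
    finally show ?thesis using stay_n_plus_until_n[of R "b * N" y] by linarith
  qed
  have "0 < d ^ b" using d by simp
  then show ?thesis using bound by (rule that)
qed

lemma stay_n_eventually_lt:
  assumes "\<forall>p. 0 < term_prob Pz Pp p" "\<And>x. x \<in> R \<Longrightarrow> 1 \<le> snd x \<and> snd x \<le> b" "0 < \<epsilon>"
  shows "\<exists>n. stay_n Pz Pp R n x < \<epsilon>"
proof -
  obtain L \<delta> where "0 < \<delta>" and L: "\<And>y. stay_n Pz Pp R L y \<le> 1 - \<delta>"
    using stay_n_strip_le[OF assms(1,2)] by metis
  then obtain k where "(1 - \<delta>) ^ k < \<epsilon>"
    using real_arch_pow_inv[OF \<open>0 < \<epsilon>\<close>, of "1 - \<delta>"] by auto
  moreover have "stay_n Pz Pp R (k * Suc L) x \<le> (1 - \<delta>) ^ k"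
    using L by (rule stay_n_geometric)
  ultimately show ?thesis by (meson le_less_trans)
qed

lemma until_n_plus_stay_n_ge_subharmonic:
  assumes "\<And>x. h x \<le> 1" and "\<And>x. x \<notin> S \<Longrightarrow> x \<notin> T \<Longrightarrow> h x \<le> 0"
    and "\<And>x. x \<in> S \<Longrightarrow> x \<notin> T \<Longrightarrow> h x \<le> pOC_step Pz Pp h x"
  shows "h x \<le> until_n Pz Pp S T n x + stay_n Pz Pp (S - T) n x"
proof (induction n arbitrary: x)
  case 0
  show ?case using assms(1,2)[of x] by auto
next
  case (Suc n)
  consider "x \<in> T" | "x \<in> S - T" | "x \<notin> S" "x \<notin> T" by blast
  then show ?case
  proof cases
    case 1
    then show ?thesis using assms(1)[of x] stay_n_outside[of x "S - T"] by simp
  next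
    case 2
    then have "h x \<le> pOC_step Pz Pp h x" using assms(3) by blast
    also have "\<dots> \<le> pOC_step Pz Pp (\<lambda>y. until_n Pz Pp S T n y + stay_n Pz Pp (S - T) n y) x"
      using Suc by (rule step_mono)
    finally show ?thesis using 2 by (simp add: pOC_step_add)
  qed (use assms(2) in simp)
qed

lemma until_prob_ge_subharmonic:
  assumes "\<forall>p. 0 < term_prob Pz Pp p" and "\<And>x. x \<in> S - T \<Longrightarrow> 1 \<le> snd x \<and> snd x \<le> b"
    and "\<And>x. h x \<le> 1" and "\<And>x. x \<notin> S \<Longrightarrow> x \<notin> T \<Longrightarrow> h x \<le> 0"
    and "\<And>x. x \<in> S \<Longrightarrow> x \<notin> T \<Longrightarrow> h x \<le> pOC_step Pz Pp h x"
  shows "h x \<le> until_prob Pz Pp S T x"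
proof (rule ccontr)
  assume "\<not> h x \<le> until_prob Pz Pp S T x"
  then obtain n where "stay_n Pz Pp (S - T) n x < h x - until_prob Pz Pp S T x"
    using stay_n_eventually_lt[OF assms(1,2)] by (meson diff_gt_0_iff_gt not_le)
  moreover have "h x \<le> until_n Pz Pp S T n x + stay_n Pz Pp (S - T) n x"
    using assms(3-5) by (rule until_n_plus_stay_n_ge_subharmonic)
  ultimately show False using until_n_le_until_prob[of S T n x] by linarith
qed

lemma step_level_plus_potential:
  assumes "potential Pp v" "1 \<le> i"
  shows "pOC_step Pz Pp (\<lambda>x. real (snd x) + v (fst x)) (p, i) = real i + v p + trend Pp"
proof -
  have rows: "(\<Sum>q\<in>UNIV. \<Sum>c\<in>{-1, 0, 1}. Pp p c q) = 1"
    using pOC unfolding pOC_def by blast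
  have "pOC_step Pz Pp (\<lambda>x. real (snd x) + v (fst x)) (p, i)
      = real i * (\<Sum>q\<in>UNIV. \<Sum>c\<in>{-1, 0, 1}. Pp p c q) + drift Pp p
        + (\<Sum>q\<in>UNIV. chainA Pp p q * v q)"
    using assms(2) unfolding pOC_step_def drift_def chainA_def
    by (simp add: of_nat_diff algebra_simps sum.distrib sum_subtractf sum_distrib_left
        sum_distrib_right)
  also have "\<dots> = real i + v p + trend Pp"
    using assms(1) rows unfolding potential_def by simp
  finally show ?thesis .
qed

lemma step_truncated_level_plus_potential_ge:
  assumes "potential Pp v" "0 \<le> trend Pp" "1 \<le> i" "i < b"
  shows "real i + v p \<le> pOC_step Pz Pp (\<lambda>x. real (min (snd x) b) + v (fst x)) (p, i)"
proof -
  have "pOC_step Pz Pp (\<lambda>x. real (min (snd x) b) + v (fst x)) (p, i)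
      = pOC_step Pz Pp (\<lambda>x. real (snd x) + v (fst x)) (p, i)"
    by (rule pOC_step_cong_pos) (use assms(3,4) in auto)
  then show ?thesis using step_level_plus_potential[OF assms(1,3)] assms(2) by simp
qed

lemma until_prob_ge_truncated_potential:
  assumes "\<forall>p. 0 < term_prob Pz Pp p" "potential Pp v" "0 \<le> trend Pp"
    and "\<And>q. v q \<le> M" "real b \<le> D" "0 < D"
  shows "(real (min c b) + v p - M) / D
    \<le> until_prob Pz Pp {x. 1 \<le> snd x} {x. b \<le> snd x \<and> 1 \<le> snd x} (p, c)"
proof -
  define g where "g x = real (min (snd x) b) + v (fst x)" for x :: "'q \<times> nat"
  have h_step: "pOC_step Pz Pp (\<lambda>x. (g x - M) / D) y = (pOC_step Pz Pp g y - M) / D" for y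
    using step_affine[of "1 / D" g "- M / D" y] by (simp add: diff_divide_distrib)
  have "(g x - M) / D \<le> until_prob Pz Pp {x. 1 \<le> snd x} {x. b \<le> snd x \<and> 1 \<le> snd x} x" for x
  proof (rule until_prob_ge_subharmonic[OF assms(1), where b = b])
    fix x :: "'q \<times> nat"
    have "g x - M \<le> D" using assms(4)[of "fst x"] assms(5) unfolding g_def by linarith
    then show "(g x - M) / D \<le> 1" using assms(6) by simp
    show "(g x - M) / D \<le> 0" if "x \<notin> {x. 1 \<le> snd x}"
      using that assms(4)[of "fst x"] assms(6) unfolding g_def by (simp add: divide_nonpos_pos)
    assume "x \<in> {x. 1 \<le> snd x}" "x \<notin> {x. b \<le> snd x \<and> 1 \<le> snd x}"
    then have "g x \<le> pOC_step Pz Pp g x"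
      using step_truncated_level_plus_potential_ge[OF assms(2,3), of "snd x" b "fst x"]
      unfolding g_def by auto
    then show "(g x - M) / D \<le> pOC_step Pz Pp (\<lambda>x. (g x - M) / D) x"
      unfolding h_step using assms(6) by (simp add: divide_right_mono)
  qed auto
  then show ?thesis unfolding g_def by fastforce
qed

end

theorem mainTheorem14:
  fixes Pz Pp :: "'q::finite \<Rightarrow> int \<Rightarrow> 'q \<Rightarrow> real"
    and v :: "'q \<Rightarrow> real" and p0 :: 'q and c0 b :: nat
  assumes "pOC Pz Pp"
    and "strongly_connected (chainA Pp)"
    and "trend Pp \<ge> 0"
    and "\<forall>p. term_prob Pz Pp p > 0"
    and "potential Pp v"
    and "c0 \<ge> 1"
    and "v p0 = Max (range v)"
  shows "until_prob Pz Pp {x. snd x \<ge> 1} {x. snd x \<ge> b \<and> snd x \<ge> 1} (p0, c0)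
           \<ge> 1 / (real b + 1 + (Max (range v) - Min (range v)))"
proof -
  interpret pOC_chain Pz Pp by unfold_locales (fact assms(1))
  define D where "D = real b + 1 + (Max (range v) - Min (range v))"
  have "Min (range v) \<le> v p0" "v p0 \<le> Max (range v)" by simp_all
  then have "real b + 1 \<le> D" unfolding D_def by simp
  show ?thesis
  proof (cases "b = 0")
    case True
    have "1 / D \<le> 1" using \<open>real b + 1 \<le> D\<close> by simp
    also have "1 = until_n Pz Pp {x. snd x \<ge> 1} {x. snd x \<ge> b \<and> snd x \<ge> 1} 0 (p0, c0)"
      using True assms(6) by simp
    also have "\<dots> \<le> until_prob Pz Pp {x. snd x \<ge> 1} {x. snd x \<ge> b \<and> snd x \<ge> 1} (p0, c0)"
      by (rule until_n_le_until_prob)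
    finally show ?thesis unfolding D_def .
  next
    case False
    then have "1 / D \<le> (real (min c0 b) + v p0 - Max (range v)) / D"
      using assms(6,7) \<open>real b + 1 \<le> D\<close> by (simp add: divide_right_mono)
    also have "\<dots> \<le> until_prob Pz Pp {x. 1 \<le> snd x} {x. b \<le> snd x \<and> 1 \<le> snd x} (p0, c0)"
      using \<open>real b + 1 \<le> D\<close>
      by (intro until_prob_ge_truncated_potential[OF assms(4,5,3)]) simp_all
    finally show ?thesis unfolding D_def .
  qed
qed

end
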